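(* Let $$N=\begin{pmatrix}2&1&0&0&1&2\\1&2&2&1&0&0\\0&0&1&2&2&1\end{pmatrix},\qquad M=\begin{pmatrix}3&3&2&1&1&2\\2&1&1&2&3&3\end{pmatrix},$$ and let $\phi:K[x_1,\dots,x_6]\to K[t_1,t_2,t_3]$, $x_i\mapsto \mathbf t^{\mathbf b_i}$ ($\mathbf b_i$ the columns of $N$). Then $I_N\subseteq I_M$, and $\mathrm{rad}((\phi(I_M))^e)=\mathrm{rad}(\phi(x_3^3-x_1x_2),\phi(x_4^3-x_5x_6))$, but $I_M\neq \mathrm{rad}(I_N+(x_3^3-x_1x_2,\;x_4^3-x_5x_6))$ (no power of $x_6^2-x_3x_4x_5\in I_M$ lies in $I_N+(x_3^3-x_1x_2,x_4^3-x_5x_6)$). In particular, the hypothesis $\Gamma(N)=V(I_N)$ cannot be dropped from Theorem 3.1 (and indeed $\Gamma(N)\ne V(I_N)$ here).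
   Context: $K$ is a field. For an integer matrix $M$ with columns $\mathbf a_i$, the toric ideal $I_M\subseteq K[x_1,\dots,x_n]$ is the kernel of $x_i\mapsto\mathbf t^{\mathbf a_i}$ into a Laurent polynomial ring. $(\phi(I_M))^e$ is the ideal of $K[t_1,t_2,t_3]$ generated by $\phi(I_M)$. $\Gamma(N)=\{(\mathbf T^{\mathbf b_1},\dots,\mathbf T^{\mathbf b_n}):\mathbf T\in\bar K^3\}$ and $V(I_N)$ is the zero set of $I_N$ in $\bar K^6$. Theorem 3.1 states: if $N$ has non-negative entries, $I_N\subseteq I_M$ and $\Gamma(N)=V(I_N)$, then for $f_1,\dots,f_s\in I_M$, $I_M=\mathrm{rad}(I_N+(f_1,\dots,f_s))$ iff $\mathrm{rad}((\phi(I_M))^e)=\mathrm{rad}(\phi(f_1),\dots,\phi(f_s))$. *)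

theory Defs
  imports "HOL-Library.Poly_Mapping" "HOL-Algebra.Algebraic_Closure_Type"
begin

(* Multivariate polynomials over 'a: finitely supported maps from monomials
   (exponent vectors nat \<Rightarrow>\<^sub>0 nat, variable i = x_{i+1}) to coefficients. *)
type_synonym 'a mpoly = "(nat \<Rightarrow>\<^sub>0 nat) \<Rightarrow>\<^sub>0 'a"
type_synonym 'a lpoly = "(nat \<Rightarrow>\<^sub>0 int) \<Rightarrow>\<^sub>0 'a"

definition Var :: "nat \<Rightarrow> 'a::comm_ring_1 mpoly" where
  "Var i = Poly_Mapping.single (Poly_Mapping.single i 1) 1"

definition poly_ring :: "nat \<Rightarrow> 'a::comm_ring_1 mpoly set" where
  "poly_ring n = {p. \<forall>m \<in> Poly_Mapping.keys p. Poly_Mapping.keys m \<subseteq> {..<n}}"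

definition psubst :: "(nat \<Rightarrow> ('m::comm_monoid_add \<Rightarrow>\<^sub>0 'a::comm_ring_1)) \<Rightarrow> 'a mpoly \<Rightarrow> ('m \<Rightarrow>\<^sub>0 'a)" where
  "psubst \<sigma> p = (\<Sum>m \<in> Poly_Mapping.keys p.
      Poly_Mapping.single 0 (Poly_Mapping.lookup p m) *
      (\<Prod>i \<in> Poly_Mapping.keys m. \<sigma> i ^ Poly_Mapping.lookup m i))"

definition lmono :: "int list \<Rightarrow> 'a::comm_ring_1 lpoly" where
  "lmono a = Poly_Mapping.single (Poly_Mapping.nth a) 1"

definition pmono :: "nat list \<Rightarrow> 'a::comm_ring_1 mpoly" where
  "pmono a = Poly_Mapping.single (Poly_Mapping.nth a) 1"

definition toric_ideal :: "int list list \<Rightarrow> 'a::comm_ring_1 mpoly set" where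
  "toric_ideal cols = {f \<in> poly_ring (length cols).
      psubst (\<lambda>i. lmono (cols ! i)) f = (0 :: 'a lpoly)}"

definition is_ideal_in :: "'a::comm_ring_1 set \<Rightarrow> 'a set \<Rightarrow> bool" where
  "is_ideal_in R I \<longleftrightarrow> I \<subseteq> R \<and> 0 \<in> I \<and> (\<forall>a\<in>I. \<forall>b\<in>I. a + b \<in> I) \<and>
     (\<forall>r\<in>R. \<forall>a\<in>I. r * a \<in> I)"

definition ideal_gen_in :: "'a::comm_ring_1 set \<Rightarrow> 'a set \<Rightarrow> 'a set" where
  "ideal_gen_in R S = \<Inter>{I. is_ideal_in R I \<and> S \<subseteq> I}"

definition rad_in :: "'a::comm_ring_1 set \<Rightarrow> 'a set \<Rightarrow> 'a set" where
  "rad_in R I = {f \<in> R. \<exists>k>0. f ^ k \<in> I}"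

(* the concrete matrices, by columns *)
definition N_cols :: "int list list" where
  "N_cols = [[2,1,0],[1,2,0],[0,2,1],[0,1,2],[1,0,2],[2,0,1]]"

definition M_cols :: "int list list" where
  "M_cols = [[3,2],[3,1],[2,1],[1,2],[1,3],[2,3]]"

definition phiN :: "'a::comm_ring_1 mpoly \<Rightarrow> 'a mpoly" where
  "phiN = psubst (\<lambda>i. pmono (map nat (N_cols ! i)))"

definition eval_ac :: "'a::field mpoly \<Rightarrow> 'a alg_closure list \<Rightarrow> 'a alg_closure" where
  "eval_ac p x = (\<Sum>m \<in> Poly_Mapping.keys p. to_ac (Poly_Mapping.lookup p m) *
      (\<Prod>i \<in> Poly_Mapping.keys m. (x ! i) ^ Poly_Mapping.lookup m i))"

definition zero_set :: "nat \<Rightarrow> 'a::field mpoly set \<Rightarrow> 'a alg_closure list set" where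
  "zero_set n I = {x. length x = n \<and> (\<forall>f\<in>I. eval_ac f x = 0)}"

definition Gamma :: "nat \<Rightarrow> int list list \<Rightarrow> 'a::field alg_closure list set" where
  "Gamma d cols = {map (\<lambda>b. \<Prod>j<d. T j ^ nat (b ! j)) cols | T. True}"

end

theory Submission
  imports Defs
begin

(* The M-degree of a monomial is a linear function of its N-degree (M = L N with
   L = [[1,1,0],[1,0,1]]), so the fibres of N refine those of M and I_N is contained in I_M.
   Under phi, x^m goes to t^n with n = N m and n1 + n2 + n3 = 3|m|. Modulo h (t2, t3), where
   h = t2^3 t3^3 - t1^3, such a monomial may trade t1^3 for t2^3 t3^3 as long as n2 or n3 is
   positive, and the resulting normal form depends only on the M-degree (n1 + n2, n1 + n3).
   Hence phi(I_M) lies in h (t2, t3), whose fifth powers lie in (t2^3 h, t3^3 h) = (phi f1, phi f2).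
   On the other hand, the only monomials whose N-degree is a multiple of b_6 (resp. b_1) are the
   powers of x6 (resp. x1), so evaluation at the coordinate point e_6 (resp. e_1) kills I_N.
   Evaluation at e_6 also kills f1 and f2 but sends g to 1, so no power of g lies in
   I_N + (f1, f2); and e_1 is not of the form (T^b_1, ..., T^b_6), since T^b_1 = 1 forces
   T^b_2 to be nonzero. *)

abbreviation lookup where "lookup \<equiv> Poly_Mapping.lookup"
abbreviation keys where "keys \<equiv> Poly_Mapping.keys"
abbreviation single where "single \<equiv> Poly_Mapping.single"

definition mono_subst :: "(nat \<Rightarrow> ('m::comm_monoid_add \<Rightarrow>\<^sub>0 'a::comm_ring_1)) \<Rightarrow> (nat \<Rightarrow>\<^sub>0 nat) \<Rightarrow> 'm \<Rightarrow>\<^sub>0 'a"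
  where "mono_subst \<sigma> m = (\<Prod>i\<in>keys m. \<sigma> i ^ lookup m i)"

lemma psubst_eq_sum_mono_subst: "psubst \<sigma> p = (\<Sum>m\<in>keys p. single 0 (lookup p m) * mono_subst \<sigma> m)"
  by (simp add: psubst_def mono_subst_def)

lemma psubst_eq_sum_superset:
  assumes "finite S" "keys p \<subseteq> S"
  shows "psubst \<sigma> p = (\<Sum>m\<in>S. single 0 (lookup p m) * mono_subst \<sigma> m)"
  unfolding psubst_eq_sum_mono_subst
  by (rule sum.mono_neutral_left) (use assms in \<open>auto simp: in_keys_iff\<close>)

lemma mono_subst_eq_prod_superset:
  assumes "finite T" "keys m \<subseteq> T"
  shows "mono_subst \<sigma> m = (\<Prod>i\<in>T. \<sigma> i ^ lookup m i)"
  unfolding mono_subst_def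
  by (rule prod.mono_neutral_left) (use assms in \<open>auto simp: in_keys_iff\<close>)

lemma mono_subst_0 [simp]: "mono_subst \<sigma> 0 = 1"
  by (simp add: mono_subst_def)

lemma mono_subst_add: "mono_subst \<sigma> (a + b) = mono_subst \<sigma> a * mono_subst \<sigma> b"
proof -
  let ?T = "keys a \<union> keys b"
  have "mono_subst \<sigma> (a + b) = (\<Prod>i\<in>?T. \<sigma> i ^ lookup (a + b) i)"
    using keys_add[of a b] by (intro mono_subst_eq_prod_superset) auto
  also have "\<dots> = (\<Prod>i\<in>?T. \<sigma> i ^ lookup a i) * (\<Prod>i\<in>?T. \<sigma> i ^ lookup b i)"
    by (simp add: lookup_add power_add prod.distrib)
  also have "\<dots> = mono_subst \<sigma> a * mono_subst \<sigma> b"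
    by (simp add: mono_subst_eq_prod_superset[of ?T])
  finally show ?thesis .
qed

lemma psubst_0 [simp]: "psubst \<sigma> 0 = 0"
  by (simp add: psubst_def)

lemma psubst_single: "psubst \<sigma> (single m c) = single 0 c * mono_subst \<sigma> m"
  by (simp add: psubst_eq_sum_mono_subst)

lemma psubst_add: "psubst \<sigma> (p + q) = psubst \<sigma> p + psubst \<sigma> q"
proof -
  let ?S = "keys p \<union> keys q"
  have "psubst \<sigma> (p + q) = (\<Sum>m\<in>?S. single 0 (lookup (p + q) m) * mono_subst \<sigma> m)"
    using keys_add[of p q] by (intro psubst_eq_sum_superset) auto
  also have "\<dots> = psubst \<sigma> p + psubst \<sigma> q"
    by (simp add: psubst_eq_sum_superset[of ?S] lookup_add single_add distrib_right sum.distrib)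
  finally show ?thesis .
qed

lemma additive_psubst: "additive (psubst \<sigma>)"
  by unfold_locales (rule psubst_add)

lemma additive_single: "additive (single k)"
  by unfold_locales (rule single_add)

lemma poly_mapping_expansion: "p = (\<Sum>m\<in>keys p. single m (lookup p m))"
  by (rule poly_mapping_eqI) (simp add: lookup_sum lookup_single when_def in_keys_iff)

lemma psubst_mult: "psubst \<sigma> (p * q) = psubst \<sigma> p * psubst \<sigma> q"
proof -
  have "p * q = (\<Sum>a\<in>keys p. \<Sum>b\<in>keys q. single (a + b) (lookup p a * lookup q b))"
    by (subst (1) poly_mapping_expansion[of p], subst (1) poly_mapping_expansion[of q])
      (simp add: sum_distrib_left sum_distrib_right mult_single sum.swap[of _ "keys q"])
  then have "psubst \<sigma> (p * q) =
      (\<Sum>a\<in>keys p. \<Sum>b\<in>keys q. single 0 (lookup p a * lookup q b) * mono_subst \<sigma> (a + b))"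
    by (simp add: additive.sum[OF additive_psubst] psubst_single)
  also have "\<dots> = (\<Sum>a\<in>keys p. \<Sum>b\<in>keys q.
      (single 0 (lookup p a) * mono_subst \<sigma> a) * (single 0 (lookup q b) * mono_subst \<sigma> b))"
    by (intro sum.cong refl) (simp add: mono_subst_add mult_single[of 0 _ 0, simplified, symmetric] ac_simps)
  also have "\<dots> = psubst \<sigma> p * psubst \<sigma> q"
    by (simp add: psubst_eq_sum_mono_subst sum_distrib_left sum_distrib_right sum.swap[of _ "keys q"])
  finally show ?thesis .
qed

lemma psubst_1 [simp]: "psubst \<sigma> 1 = 1"
  using psubst_single[of \<sigma> 0 1] by simp

lemma psubst_power: "psubst \<sigma> (p ^ n) = psubst \<sigma> p ^ n"
  by (induction n) (simp_all add: psubst_mult)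

lemma psubst_Var [simp]: "psubst \<sigma> (Var i) = \<sigma> i"
  by (simp add: Var_def psubst_single mono_subst_def)

lemmas psubst_hom_simps =
  psubst_add psubst_mult psubst_power additive.diff[OF additive_psubst] additive.minus[OF additive_psubst]

lemma poly_ring_keys: "f \<in> poly_ring n \<Longrightarrow> m \<in> keys f \<Longrightarrow> keys m \<subseteq> {..<n}"
  by (auto simp: poly_ring_def)

lemma poly_ring_add: "p \<in> poly_ring n \<Longrightarrow> q \<in> poly_ring n \<Longrightarrow> p + q \<in> poly_ring n"
  unfolding poly_ring_def using keys_add[of p q] by blast

lemma poly_ring_uminus: "p \<in> poly_ring n \<Longrightarrow> - p \<in> poly_ring n"
  unfolding poly_ring_def by simp

lemma poly_ring_diff: "p \<in> poly_ring n \<Longrightarrow> q \<in> poly_ring n \<Longrightarrow> p - q \<in> poly_ring n"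
  using poly_ring_add[of p n "- q"] poly_ring_uminus[of q n] by simp

lemma poly_ring_mult:
  assumes "p \<in> poly_ring n" "q \<in> poly_ring n"
  shows "p * q \<in> poly_ring n"
  unfolding poly_ring_def
proof (intro CollectI ballI subsetI)
  fix m i
  assume "m \<in> keys (p * q)" "i \<in> keys m"
  moreover obtain a b where "m = a + b" "a \<in> keys p" "b \<in> keys q"
    using keys_mult[of p q] \<open>m \<in> keys (p * q)\<close> by blast
  ultimately show "i \<in> {..<n}"
    using keys_add[of a b] assms by (auto simp: poly_ring_def)
qed

lemma poly_ring_const: "single 0 c \<in> poly_ring n"
  by (simp add: poly_ring_def)

lemma poly_ring_monomial: "keys u \<subseteq> {..<n} \<Longrightarrow> single u c \<in> poly_ring n"
  by (simp add: poly_ring_def)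

lemma poly_ring_0: "0 \<in> poly_ring n"
  using poly_ring_const[of 0] by simp

lemma poly_ring_1: "1 \<in> poly_ring n"
  using poly_ring_const[of 1] by simp

lemma poly_ring_numeral: "numeral k \<in> poly_ring n"
  using poly_ring_const[of "numeral k"] by simp

lemma poly_ring_Var: "i < n \<Longrightarrow> Var i \<in> poly_ring n"
  by (simp add: poly_ring_def Var_def)

lemma poly_ring_power: "p \<in> poly_ring n \<Longrightarrow> p ^ k \<in> poly_ring n"
  by (induction k) (simp_all add: poly_ring_1 poly_ring_mult)

lemma poly_ring_sum: "(\<And>i. i \<in> A \<Longrightarrow> f i \<in> poly_ring n) \<Longrightarrow> sum f A \<in> poly_ring n"
  by (induction A rule: infinite_finite_induct) (simp_all add: poly_ring_0 poly_ring_add)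

lemmas poly_ring_intros =
  poly_ring_add poly_ring_diff poly_ring_uminus poly_ring_mult poly_ring_const poly_ring_0 poly_ring_1
  poly_ring_numeral poly_ring_Var poly_ring_power poly_ring_sum

lemma ideal_gen_in_base: "s \<in> S \<Longrightarrow> s \<in> ideal_gen_in R S"
  by (auto simp: ideal_gen_in_def)

lemma ideal_gen_in_add: "a \<in> ideal_gen_in R S \<Longrightarrow> b \<in> ideal_gen_in R S \<Longrightarrow> a + b \<in> ideal_gen_in R S"
  by (auto simp: ideal_gen_in_def is_ideal_in_def)

lemma ideal_gen_in_mult: "r \<in> R \<Longrightarrow> a \<in> ideal_gen_in R S \<Longrightarrow> r * a \<in> ideal_gen_in R S"
  by (auto simp: ideal_gen_in_def is_ideal_in_def)

lemma ideal_gen_in_least: "is_ideal_in R I \<Longrightarrow> S \<subseteq> I \<Longrightarrow> ideal_gen_in R S \<subseteq> I"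
  by (auto simp: ideal_gen_in_def)

lemma ideal_gen_in_mono: "S \<subseteq> S' \<Longrightarrow> ideal_gen_in R S \<subseteq> ideal_gen_in R S'"
  by (auto simp: ideal_gen_in_def)

lemma rad_in_mono: "I \<subseteq> I' \<Longrightarrow> rad_in R I \<subseteq> rad_in R I'"
  by (auto simp: rad_in_def)

lemma is_ideal_in_sum: "is_ideal_in R I \<Longrightarrow> (\<And>i. i \<in> A \<Longrightarrow> f i \<in> I) \<Longrightarrow> sum f A \<in> I"
  by (induction A rule: infinite_finite_induct) (auto simp: is_ideal_in_def)

lemma is_ideal_in_psubst_kernel: "is_ideal_in (poly_ring n) {p \<in> poly_ring n. psubst \<sigma> p = 0}"
  by (auto simp: is_ideal_in_def psubst_add psubst_mult poly_ring_add poly_ring_mult poly_ring_0)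

section \<open>Monomial substitutions and toric ideals\<close>

definition weighted_degree :: "(nat \<Rightarrow> 'm::comm_monoid_add) \<Rightarrow> (nat \<Rightarrow>\<^sub>0 nat) \<Rightarrow> 'm" where
  "weighted_degree \<beta> m = (\<Sum>i\<in>keys m. \<Sum>_<lookup m i. \<beta> i)"

lemma single_1_power: "single x (1::'a::comm_ring_1) ^ k = single (\<Sum>_<k. x) 1"
  by (induction k) (simp_all add: mult_single add.commute)

lemma prod_single_1: "(\<Prod>i\<in>I. single (x i) (1::'a::comm_ring_1)) = single (\<Sum>i\<in>I. x i) 1"
  by (induction I rule: infinite_finite_induct) (simp_all add: mult_single)

lemma mono_subst_monomials:
  "mono_subst (\<lambda>i. single (\<beta> i) (1::'a::comm_ring_1)) m = single (weighted_degree \<beta> m) 1"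
  by (simp add: mono_subst_def weighted_degree_def single_1_power prod_single_1)

lemma psubst_monomials:
  "psubst (\<lambda>i. single (\<beta> i) (1::'a::comm_ring_1)) f = (\<Sum>m\<in>keys f. single (weighted_degree \<beta> m) (lookup f m))"
  by (simp add: psubst_eq_sum_mono_subst mono_subst_monomials mult_single)

lemma lookup_psubst_monomials:
  "lookup (psubst (\<lambda>i. single (\<beta> i) (1::'a::comm_ring_1)) f) e =
     (\<Sum>m\<in>{m\<in>keys f. weighted_degree \<beta> m = e}. lookup f m)"
  by (simp add: psubst_monomials lookup_sum lookup_single when_def sum.inter_filter)

lemma lookup_weighted_degree:
  fixes \<beta> :: "nat \<Rightarrow> 'k \<Rightarrow>\<^sub>0 'b::comm_semiring_1"
  assumes "finite S" "keys m \<subseteq> S"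
  shows "lookup (weighted_degree \<beta> m) j = (\<Sum>i\<in>S. of_nat (lookup m i) * lookup (\<beta> i) j)"
proof -
  have "lookup (weighted_degree \<beta> m) j = (\<Sum>i\<in>keys m. of_nat (lookup m i) * lookup (\<beta> i) j)"
    by (simp add: weighted_degree_def lookup_sum)
  also have "\<dots> = (\<Sum>i\<in>S. of_nat (lookup m i) * lookup (\<beta> i) j)"
    by (rule sum.mono_neutral_left) (use assms in \<open>auto simp: in_keys_iff\<close>)
  finally show ?thesis .
qed

definition toric_degree :: "int list list \<Rightarrow> (nat \<Rightarrow>\<^sub>0 nat) \<Rightarrow> nat \<Rightarrow>\<^sub>0 int" where
  "toric_degree cols = weighted_degree (\<lambda>i. Poly_Mapping.nth (cols ! i))"

lemma toric_ideal_iff_fibre_sums: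
  "f \<in> toric_ideal cols \<longleftrightarrow> f \<in> poly_ring (length cols) \<and>
     (\<forall>e. (\<Sum>m\<in>{m\<in>keys f. toric_degree cols m = e}. lookup f m) = (0::'a::comm_ring_1))"
proof -
  have "psubst (\<lambda>i. lmono (cols ! i)) f = (0::'a lpoly) \<longleftrightarrow>
      (\<forall>e. lookup (psubst (\<lambda>i. single (Poly_Mapping.nth (cols ! i)) 1) f) e = (0::'a))"
    by (simp add: lmono_def poly_mapping_eq_iff fun_eq_iff)
  then show ?thesis
    by (simp add: toric_ideal_def lookup_psubst_monomials toric_degree_def)
qed

lemma sum_fibrewise_eq_0:
  fixes \<chi> :: "'a::ab_group_add \<Rightarrow> 'b::ring"
  assumes "additive \<chi>" "finite K" "\<And>e. (\<Sum>m\<in>{m\<in>K. D m = e}. c m) = 0"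
  shows "(\<Sum>m\<in>K. \<chi> (c m) * G (D m)) = 0"
proof -
  have "(\<Sum>m\<in>K. \<chi> (c m) * G (D m)) = (\<Sum>e\<in>D ` K. \<Sum>m\<in>{m\<in>K. D m = e}. \<chi> (c m) * G e)"
    by (subst sum.image_gen[OF assms(2), of _ D]) (auto intro!: sum.cong)
  also have "\<dots> = (\<Sum>e\<in>D ` K. \<chi> (\<Sum>m\<in>{m\<in>K. D m = e}. c m) * G e)"
    by (simp add: additive.sum[OF assms(1)] sum_distrib_right)
  also have "\<dots> = 0"
    by (simp add: assms(3) additive.zero[OF assms(1)])
  finally show ?thesis .
qed

lemma toric_ideal_sum_eq_0:
  fixes \<chi> :: "'a::comm_ring_1 \<Rightarrow> 'b::ring"
  assumes f: "f \<in> toric_ideal cols" and "additive \<chi>"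
    and \<Phi>: "\<And>m. keys m \<subseteq> {..<length cols} \<Longrightarrow> \<Phi> m = G (toric_degree cols m)"
  shows "(\<Sum>m\<in>keys f. \<chi> (lookup f m) * \<Phi> m) = 0"
proof -
  have "f \<in> poly_ring (length cols)"
    using f by (simp add: toric_ideal_iff_fibre_sums)
  then have "(\<Sum>m\<in>keys f. \<chi> (lookup f m) * \<Phi> m) = (\<Sum>m\<in>keys f. \<chi> (lookup f m) * G (toric_degree cols m))"
    by (intro sum.cong refl) (simp add: \<Phi> poly_ring_keys)
  also have "\<dots> = 0"
    using f by (intro sum_fibrewise_eq_0 \<open>additive \<chi>\<close>) (simp_all add: toric_ideal_iff_fibre_sums)
  finally show ?thesis .
qed

lemma toric_ideal_subset:
  assumes "length A = length B"
    and "\<And>m. keys m \<subseteq> {..<length A} \<Longrightarrow> toric_degree B m = L (toric_degree A m)"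
  shows "toric_ideal A \<subseteq> (toric_ideal B :: 'a::comm_ring_1 mpoly set)"
proof
  fix f :: "'a mpoly"
  assume f: "f \<in> toric_ideal A"
  have "(\<Sum>m\<in>{m\<in>keys f. toric_degree B m = e}. lookup f m) = 0" for e
  proof -
    have "additive (\<lambda>x::'a. x)"
      by unfold_locales simp
    then have "(\<Sum>m\<in>keys f. lookup f m * (if toric_degree B m = e then 1 else 0)) = 0"
      by (rule toric_ideal_sum_eq_0[OF f, where G = "\<lambda>d. if L d = e then 1 else 0"]) (use assms in simp)
    then show ?thesis
      by (simp add: sum.inter_filter if_distrib[where f = "times _"] cong: if_cong)
  qed
  then show "f \<in> toric_ideal B"
    using f assms(1) by (simp add: toric_ideal_iff_fibre_sums)
qed

lemma sum_lessThan_6: "(\<Sum>i<(6::nat). F i) = F 0 + F 1 + F 2 + F 3 + F 4 + (F 5 :: 'a::comm_monoid_add)"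
  by (simp add: numeral_eq_Suc ac_simps)

lemma less_3_cases:
  obtains "j = 0" | "j = 1" | "j = 2" | "3 \<le> (j::nat)"
  by linarith

lemma length_N_cols [simp]: "length N_cols = 6"
  and length_M_cols [simp]: "length M_cols = 6"
  by (simp_all add: N_cols_def M_cols_def)

definition N_degree :: "(nat \<Rightarrow>\<^sub>0 nat) \<Rightarrow> nat list" where
  "N_degree m =
     [2 * lookup m 0 + lookup m 1 + lookup m 4 + 2 * lookup m 5,
      lookup m 0 + 2 * lookup m 1 + 2 * lookup m 2 + lookup m 3,
      lookup m 2 + 2 * lookup m 3 + 2 * lookup m 4 + lookup m 5]"

lemma length_N_degree [simp]: "length (N_degree m) = 3"
  by (simp add: N_degree_def)

lemma toric_degree_N:
  assumes "keys m \<subseteq> {..<6}"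
  shows "toric_degree N_cols m = Poly_Mapping.nth (map int (N_degree m))"
proof (rule poly_mapping_eqI)
  fix j :: nat
  show "lookup (toric_degree N_cols m) j = lookup (Poly_Mapping.nth (map int (N_degree m))) j"
    by (cases j rule: less_3_cases)
      (simp_all add: toric_degree_def lookup_weighted_degree[OF _ assms] sum_lessThan_6
        N_cols_def N_degree_def nth_default_def)
qed

lemma toric_degree_M:
  assumes "keys m \<subseteq> {..<6}"
  shows "toric_degree M_cols m =
    Poly_Mapping.nth [int (N_degree m ! 0 + N_degree m ! 1), int (N_degree m ! 0 + N_degree m ! 2)]"
proof (rule poly_mapping_eqI)
  fix j :: nat
  show "lookup (toric_degree M_cols m) j =
      lookup (Poly_Mapping.nth [int (N_degree m ! 0 + N_degree m ! 1), int (N_degree m ! 0 + N_degree m ! 2)]) j"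
    by (cases j rule: less_3_cases)
      (simp_all add: toric_degree_def lookup_weighted_degree[OF _ assms] sum_lessThan_6
        M_cols_def N_degree_def nth_default_def)
qed

lemma phiN_exponent:
  assumes "keys m \<subseteq> {..<6}"
  shows "weighted_degree (\<lambda>i. Poly_Mapping.nth (map nat (N_cols ! i))) m = Poly_Mapping.nth (N_degree m)"
proof (rule poly_mapping_eqI)
  fix j :: nat
  show "lookup (weighted_degree (\<lambda>i. Poly_Mapping.nth (map nat (N_cols ! i))) m) j =
      lookup (Poly_Mapping.nth (N_degree m)) j"
    by (cases j rule: less_3_cases)
      (simp_all add: lookup_weighted_degree[OF _ assms] sum_lessThan_6
        N_cols_def N_degree_def nth_default_def)
qed

lemma phiN_eq_sum:
  assumes "f \<in> poly_ring 6"
  shows "phiN f = (\<Sum>m\<in>keys f. single 0 (lookup f m) * pmono (N_degree m))"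
  unfolding phiN_def pmono_def psubst_monomials
  using assms by (intro sum.cong refl) (simp add: phiN_exponent poly_ring_keys mult_single)

lemma toric_ideal_N_subset_M: "toric_ideal N_cols \<subseteq> (toric_ideal M_cols :: 'a::comm_ring_1 mpoly set)"
proof (rule toric_ideal_subset)
  fix m :: "nat \<Rightarrow>\<^sub>0 nat"
  assume "keys m \<subseteq> {..<length N_cols}"
  then show "toric_degree M_cols m =
      (\<lambda>d. Poly_Mapping.nth [lookup d 0 + lookup d 1, lookup d 0 + lookup d 2]) (toric_degree N_cols m)"
    by (simp add: toric_degree_M toric_degree_N nth_default_def N_degree_def)
qed simp

lemma Var_power: "Var i ^ k = single (single i k) 1"
  by (induction k) (simp_all add: Var_def mult_single single_add[symmetric])

lemma pmono_3: "pmono [a, b, c] = Var 0 ^ a * Var 1 ^ b * Var 2 ^ c"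
proof -
  have "Poly_Mapping.nth [a, b, c] = single 0 a + single 1 b + single 2 c"
  proof (rule poly_mapping_eqI)
    fix j :: nat
    show "lookup (Poly_Mapping.nth [a, b, c]) j = lookup (single 0 a + single 1 b + single 2 c) j"
      by (cases j rule: less_3_cases) (simp_all add: lookup_add lookup_single nth_default_def)
  qed
  then show ?thesis
    by (simp add: pmono_def Var_power mult_single)
qed

lemma keys_add_subset: "keys m \<subseteq> A \<Longrightarrow> keys m' \<subseteq> A \<Longrightarrow> keys (m + m') \<subseteq> A"
  using keys_add[of m m'] by blast

lemma binomial_in_toric_ideal:
  assumes "keys u \<subseteq> {..<length cols}" "keys v \<subseteq> {..<length cols}"
    and "toric_degree cols u = toric_degree cols v"
  shows "single u 1 - single v 1 \<in> (toric_ideal cols :: 'a::comm_ring_1 mpoly set)"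
proof -
  have "single u 1 - single v (1::'a) \<in> poly_ring (length cols)"
    using assms(1,2) by (intro poly_ring_diff poly_ring_monomial)
  moreover have "psubst (\<lambda>i. lmono (cols ! i)) (single u 1 - single v (1::'a)) = 0"
    using assms(3)
    by (simp add: lmono_def psubst_hom_simps psubst_single mono_subst_monomials toric_degree_def)
  ultimately show ?thesis
    by (simp add: toric_ideal_def)
qed

lemma f1_in_toric_ideal_M: "Var 2 ^ 3 - Var 0 * Var 1 \<in> (toric_ideal M_cols :: 'a::comm_ring_1 mpoly set)"
proof -
  have "Var 2 ^ 3 - Var 0 * Var 1 = single (single 2 3) 1 - single (single 0 1 + single 1 1) (1::'a)"
    by (simp only: Var_power) (simp add: Var_def mult_single)
  also have "\<dots> \<in> toric_ideal M_cols"
    by (rule binomial_in_toric_ideal) (simp_all add: keys_add_subset toric_degree_M N_degree_def lookup_add lookup_single)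
  finally show ?thesis .
qed

lemma f2_in_toric_ideal_M: "Var 3 ^ 3 - Var 4 * Var 5 \<in> (toric_ideal M_cols :: 'a::comm_ring_1 mpoly set)"
proof -
  have "Var 3 ^ 3 - Var 4 * Var 5 = single (single 3 3) 1 - single (single 4 1 + single 5 1) (1::'a)"
    by (simp only: Var_power) (simp add: Var_def mult_single)
  also have "\<dots> \<in> toric_ideal M_cols"
    by (rule binomial_in_toric_ideal) (simp_all add: keys_add_subset toric_degree_M N_degree_def lookup_add lookup_single)
  finally show ?thesis .
qed

lemma g_in_toric_ideal_M: "Var 5 ^ 2 - Var 2 * Var 3 * Var 4 \<in> (toric_ideal M_cols :: 'a::comm_ring_1 mpoly set)"
proof -
  have "Var 5 ^ 2 - Var 2 * Var 3 * Var 4 = single (single 5 2) 1 - single (single 2 1 + single 3 1 + single 4 1) (1::'a)"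
    by (simp only: Var_power) (simp add: Var_def mult_single)
  also have "\<dots> \<in> toric_ideal M_cols"
    by (rule binomial_in_toric_ideal) (simp_all add: keys_add_subset toric_degree_M N_degree_def lookup_add lookup_single)
  finally show ?thesis .
qed

section \<open>The image of the toric ideal of M under phi\<close>

definition common_factor :: "'a::comm_ring_1 mpoly" where
  "common_factor = Var 1 ^ 3 * Var 2 ^ 3 - Var 0 ^ 3"

definition common_factor_ideal :: "'a::comm_ring_1 mpoly set" where
  "common_factor_ideal =
     {common_factor * (a * Var 1 + b * Var 2) | a b. a \<in> poly_ring 3 \<and> b \<in> poly_ring 3}"

lemma common_factor_in_poly_ring: "common_factor \<in> poly_ring 3"
  unfolding common_factor_def by (intro poly_ring_intros) auto

lemma common_factor_idealI:
  "a \<in> poly_ring 3 \<Longrightarrow> b \<in> poly_ring 3 \<Longrightarrow> common_factor * (a * Var 1 + b * Var 2) \<in> common_factor_ideal"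
  unfolding common_factor_ideal_def by blast

lemma is_ideal_in_common_factor_ideal:
  "is_ideal_in (poly_ring 3) (common_factor_ideal :: 'a::comm_ring_1 mpoly set)"
  unfolding is_ideal_in_def
proof (intro conjI ballI subsetI)
  fix x :: "'a mpoly"
  assume "x \<in> common_factor_ideal"
  then show "x \<in> poly_ring 3"
    using common_factor_in_poly_ring by (auto simp: common_factor_ideal_def intro!: poly_ring_intros)
next
  show "(0 :: 'a mpoly) \<in> common_factor_ideal"
    using common_factor_idealI[OF poly_ring_0 poly_ring_0] by simp
next
  fix x y :: "'a mpoly"
  assume "x \<in> common_factor_ideal" "y \<in> common_factor_ideal"
  then obtain a b a' b' where "x = common_factor * (a * Var 1 + b * Var 2)" "a \<in> poly_ring 3" "b \<in> poly_ring 3"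
    and "y = common_factor * (a' * Var 1 + b' * Var 2)" "a' \<in> poly_ring 3" "b' \<in> poly_ring 3"
    by (auto simp: common_factor_ideal_def)
  then show "x + y \<in> common_factor_ideal"
    using common_factor_idealI[of "a + a'" "b + b'"] by (simp add: poly_ring_add algebra_simps)
next
  fix r x :: "'a mpoly"
  assume "r \<in> poly_ring 3" "x \<in> common_factor_ideal"
  then obtain a b where "x = common_factor * (a * Var 1 + b * Var 2)" "a \<in> poly_ring 3" "b \<in> poly_ring 3"
    by (auto simp: common_factor_ideal_def)
  with \<open>r \<in> poly_ring 3\<close> show "r * x \<in> common_factor_ideal"
    using common_factor_idealI[of "r * a" "r * b"] by (simp add: poly_ring_mult algebra_simps)
qed

lemma common_factor_mult_in_ideal:
  assumes "p \<in> poly_ring 3" "0 < b \<or> 0 < c"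
  shows "common_factor * (Var 1 ^ b * Var 2 ^ c * p) \<in> common_factor_ideal"
  using assms(2)
proof
  assume "0 < b"
  then have "Var 1 ^ b * Var 2 ^ c * p = (Var 1 ^ (b - 1) * Var 2 ^ c * p) * Var 1 + 0 * Var 2"
    by (cases b) (simp_all add: ac_simps)
  moreover have "Var 1 ^ (b - 1) * Var 2 ^ c * p \<in> poly_ring 3"
    using assms(1) by (intro poly_ring_intros) auto
  ultimately show ?thesis
    by (metis common_factor_idealI poly_ring_0)
next
  assume "0 < c"
  then have "Var 1 ^ b * Var 2 ^ c * p = 0 * Var 1 + (Var 1 ^ b * Var 2 ^ (c - 1) * p) * Var 2"
    by (cases c) (simp_all add: ac_simps)
  moreover have "Var 1 ^ b * Var 2 ^ (c - 1) * p \<in> poly_ring 3"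
    using assms(1) by (intro poly_ring_intros) auto
  ultimately show ?thesis
    by (metis common_factor_idealI poly_ring_0)
qed

lemma common_factor_dvd_power_diff:
  fixes q :: nat
  obtains G :: "'a::comm_ring_1 mpoly"
  where "G \<in> poly_ring 3" "(Var 0 ^ 3) ^ q - (Var 1 ^ 3 * Var 2 ^ 3) ^ q = common_factor * G"
proof
  let ?X = "Var 0 ^ 3 :: 'a mpoly" and ?Y = "Var 1 ^ 3 * Var 2 ^ 3 :: 'a mpoly"
  define S where "S = (\<Sum>i<q. ?Y ^ (q - Suc i) * ?X ^ i)"
  show "- S \<in> poly_ring 3"
    unfolding S_def by (intro poly_ring_intros) auto
  have "?X ^ q - ?Y ^ q = (?X - ?Y) * S"
    unfolding S_def by (rule power_diff_sumr2)
  then show "?X ^ q - ?Y ^ q = common_factor * - S"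
    by (simp add: common_factor_def algebra_simps)
qed

definition reduced_exponent :: "nat list \<Rightarrow> nat list" where
  "reduced_exponent n = [n ! 0 mod 3, n ! 1 + 3 * (n ! 0 div 3), n ! 2 + 3 * (n ! 0 div 3)]"

lemma pmono_minus_reduced_in_ideal:
  assumes "b = 0 \<and> c = 0 \<longrightarrow> a = 0"
  shows "pmono [a, b, c] - pmono (reduced_exponent [a, b, c]) \<in> common_factor_ideal"
proof -
  define r q where "r = a mod 3" and "q = a div 3"
  obtain G :: "'a mpoly" where G: "G \<in> poly_ring 3" "(Var 0 ^ 3) ^ q - (Var 1 ^ 3 * Var 2 ^ 3) ^ q = common_factor * G"
    by (rule common_factor_dvd_power_diff)
  have a: "a = r + 3 * q" and reduced: "reduced_exponent [a, b, c] = [r, b + 3 * q, c + 3 * q]"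
    by (simp_all add: r_def q_def reduced_exponent_def)
  have factored: "pmono [a, b, c] - pmono (reduced_exponent [a, b, c]) =
      Var 0 ^ r * Var 1 ^ b * Var 2 ^ c * ((Var 0 ^ 3) ^ q - (Var 1 ^ 3 * Var 2 ^ 3) ^ q)"
    unfolding reduced unfolding pmono_3 a power_add power_mult power_mult_distrib by (simp add: algebra_simps)
  show ?thesis
  proof (cases "q = 0")
    case True
    then have "pmono [a, b, c] - pmono (reduced_exponent [a, b, c]) = (0 :: 'a mpoly)"
      unfolding factored by simp
    then show ?thesis
      using common_factor_idealI[OF poly_ring_0 poly_ring_0] by simp
  next
    case False
    then have "0 < b \<or> 0 < c"
      using assms by (auto simp: q_def)
    moreover have "Var 0 ^ r * G \<in> poly_ring 3"
      using G(1) by (intro poly_ring_intros) auto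
    moreover have "pmono [a, b, c] - pmono (reduced_exponent [a, b, c]) =
        common_factor * (Var 1 ^ b * Var 2 ^ c * (Var 0 ^ r * G))"
      unfolding factored G(2) by (simp add: ac_simps)
    ultimately show ?thesis
      using common_factor_mult_in_ideal by metis
  qed
qed

lemma reduced_exponent_eq:
  assumes "3 dvd n ! 0 + n ! 1 + n ! 2"
  shows "reduced_exponent n =
    (let u = n ! 0 + n ! 1; v = n ! 0 + n ! 2; r = (u + v) mod 3 in [r, u - r, v - r])"
proof -
  define a b c where "a = n ! 0" and "b = n ! 1" and "c = n ! 2"
  have "3 dvd a + b + c"
    using assms by (simp add: a_def b_def c_def)
  then have "(a + b + (a + c)) mod 3 = a mod 3"
    by presburger
  moreover have "3 * (a div 3) + a mod 3 = a"
    by (rule mult_div_mod_eq)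
  then have "b + 3 * (a div 3) = a + b - a mod 3" and "c + 3 * (a div 3) = a + c - a mod 3"
    by linarith+
  ultimately show ?thesis
    unfolding reduced_exponent_def Let_def a_def[symmetric] b_def[symmetric] c_def[symmetric] by simp
qed

(* The reduced exponent of phi(x^m) is determined by the M-degree (n1 + n2, n1 + n3) of m,
   because n1 + n2 + n3 = 3 |m|. *)
lemma toric_ideal_M_reduced_sum_eq_0:
  assumes "f \<in> toric_ideal M_cols"
  shows "(\<Sum>m\<in>keys f. single 0 (lookup f m) * pmono (reduced_exponent (N_degree m))) = (0::'a::comm_ring_1 mpoly)"
proof (rule toric_ideal_sum_eq_0[OF assms additive_single])
  fix m :: "nat \<Rightarrow>\<^sub>0 nat"
  assume "keys m \<subseteq> {..<length M_cols}"
  then have "toric_degree M_cols m =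
      Poly_Mapping.nth [int (N_degree m ! 0 + N_degree m ! 1), int (N_degree m ! 0 + N_degree m ! 2)]"
    by (simp add: toric_degree_M)
  moreover have "3 dvd N_degree m ! 0 + N_degree m ! 1 + N_degree m ! 2"
    by (simp add: N_degree_def)
  ultimately show "pmono (reduced_exponent (N_degree m)) =
      (\<lambda>d. pmono (let u = nat (lookup d 0); v = nat (lookup d 1); r = (u + v) mod 3 in [r, u - r, v - r]))
        (toric_degree M_cols m)"
    by (simp add: reduced_exponent_eq nth_default_def nat_int_add)
qed

lemma phiN_toric_ideal_M_in_common_factor_ideal:
  assumes "f \<in> toric_ideal M_cols"
  shows "phiN f \<in> (common_factor_ideal :: 'a::comm_ring_1 mpoly set)"
proof -
  have "f \<in> poly_ring 6"
    using assms by (simp add: toric_ideal_def)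
  then have "phiN f =
      (\<Sum>m\<in>keys f. single 0 (lookup f m) * (pmono (N_degree m) - pmono (reduced_exponent (N_degree m))))"
    using toric_ideal_M_reduced_sum_eq_0[OF assms]
    by (simp add: phiN_eq_sum right_diff_distrib sum_subtractf)
  also have "\<dots> \<in> common_factor_ideal"
  proof (rule is_ideal_in_sum[OF is_ideal_in_common_factor_ideal])
    fix m
    have "pmono (N_degree m) - pmono (reduced_exponent (N_degree m)) \<in> (common_factor_ideal :: 'a mpoly set)"
      unfolding N_degree_def by (rule pmono_minus_reduced_in_ideal) simp
    then show "single 0 (lookup f m) * (pmono (N_degree m) - pmono (reduced_exponent (N_degree m)))
        \<in> common_factor_ideal"
      using is_ideal_in_common_factor_ideal poly_ring_const unfolding is_ideal_in_def by blast
  qed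
  finally show ?thesis .
qed

(* Every monomial of degree 5 in u and v is divisible by u^3 or by v^3. *)
lemma fifth_power_in_cube_ideal:
  fixes h a b u v :: "'a::comm_ring_1"
  shows "(h * (a * u + b * v)) ^ 5 =
    (h ^ 4 * (a ^ 5 * u ^ 2 + 5 * a ^ 4 * b * u * v + 10 * a ^ 3 * b ^ 2 * v ^ 2)) * (u ^ 3 * h) +
    (h ^ 4 * (10 * a ^ 2 * b ^ 3 * u ^ 2 + 5 * a * b ^ 4 * u * v + b ^ 5 * v ^ 2)) * (v ^ 3 * h)"
  by (simp add: eval_nat_numeral algebra_simps)

lemma common_factor_ideal_power_5:
  assumes "p \<in> common_factor_ideal"
  shows "p ^ 5 \<in> ideal_gen_in (poly_ring 3) {Var 1 ^ 3 * common_factor, Var 2 ^ 3 * common_factor}"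
proof -
  obtain a b where ab: "p = common_factor * (a * Var 1 + b * Var 2)" "a \<in> poly_ring 3" "b \<in> poly_ring 3"
    using assms by (auto simp: common_factor_ideal_def)
  show ?thesis
    unfolding ab(1) fifth_power_in_cube_ideal
    using ab(2,3) common_factor_in_poly_ring
    by (intro ideal_gen_in_add ideal_gen_in_mult ideal_gen_in_base)
      (auto intro!: poly_ring_intros simp del: of_nat_numeral)
qed

lemma phiN_f1: "phiN (Var 2 ^ 3 - Var 0 * Var 1) = Var 1 ^ 3 * common_factor"
  by (simp add: phiN_def psubst_hom_simps N_cols_def pmono_3 common_factor_def
      power3_eq_cube power2_eq_square algebra_simps)

lemma phiN_f2: "phiN (Var 3 ^ 3 - Var 4 * Var 5) = Var 2 ^ 3 * common_factor"
  by (simp add: phiN_def psubst_hom_simps N_cols_def pmono_3 common_factor_def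
      power3_eq_cube power2_eq_square algebra_simps)

lemma rad_phiN_toric_ideal_M:
  "rad_in (poly_ring 3) (ideal_gen_in (poly_ring 3) (phiN ` (toric_ideal M_cols :: 'a::comm_ring_1 mpoly set))) =
   rad_in (poly_ring 3) (ideal_gen_in (poly_ring 3)
     {phiN (Var 2 ^ 3 - Var 0 * Var 1 :: 'a mpoly), phiN (Var 3 ^ 3 - Var 4 * Var 5)})"
  (is "rad_in ?R (ideal_gen_in ?R ?S) = rad_in ?R (ideal_gen_in ?R ?T)")
proof
  show "rad_in ?R (ideal_gen_in ?R ?T) \<subseteq> rad_in ?R (ideal_gen_in ?R ?S)"
    using f1_in_toric_ideal_M f2_in_toric_ideal_M by (intro rad_in_mono ideal_gen_in_mono) blast
next
  show "rad_in ?R (ideal_gen_in ?R ?S) \<subseteq> rad_in ?R (ideal_gen_in ?R ?T)"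
  proof
    fix x
    assume "x \<in> rad_in ?R (ideal_gen_in ?R ?S)"
    then obtain k where x: "x \<in> ?R" "k > 0" "x ^ k \<in> ideal_gen_in ?R ?S"
      by (auto simp: rad_in_def)
    have "ideal_gen_in ?R ?S \<subseteq> common_factor_ideal"
      by (rule ideal_gen_in_least[OF is_ideal_in_common_factor_ideal])
        (auto intro: phiN_toric_ideal_M_in_common_factor_ideal)
    then have "(x ^ k) ^ 5 \<in> ideal_gen_in ?R {Var 1 ^ 3 * common_factor, Var 2 ^ 3 * common_factor}"
      using x(3) by (intro common_factor_ideal_power_5) blast
    then have "(x ^ k) ^ 5 \<in> ideal_gen_in ?R ?T"
      unfolding phiN_f1 phiN_f2 .
    then show "x \<in> rad_in ?R (ideal_gen_in ?R ?T)"
      using x(1,2) by (auto simp: rad_in_def power_mult[symmetric] intro!: exI[of _ "k * 5"])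
  qed
qed

section \<open>Coordinate points of V(I_N)\<close>

(* Variables are indexed from 0, so coord_point j is the coordinate point e_(j+1). *)
definition coord_point :: "nat \<Rightarrow> nat \<Rightarrow> 'a::zero_neq_one" where
  "coord_point j i = (if i = j then 1 else 0)"

lemma prod_coord_point_power:
  "(\<Prod>i\<in>keys m. coord_point j i ^ lookup m i) = (if keys m \<subseteq> {j} then 1 else (0::'a::comm_semiring_1))"
proof (cases "keys m \<subseteq> {j}")
  case True
  then show ?thesis
    by (auto simp: coord_point_def intro!: prod.neutral)
next
  case False
  then obtain i where "i \<in> keys m" "i \<noteq> j"
    by auto
  then have "coord_point j i ^ lookup m i = (0::'a)"
    by (simp add: coord_point_def in_keys_iff zero_power)
  then have "(\<Prod>i\<in>keys m. coord_point j i ^ lookup m i) = (0::'a)"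
    using \<open>i \<in> keys m\<close> by (intro prod_zero) auto
  with False show ?thesis
    by simp
qed

lemma keys_subset_singleton_iff_N_degree:
  assumes "keys m \<subseteq> {..<6}"
  shows "keys m \<subseteq> {0} \<longleftrightarrow> N_degree m ! 2 = 0 \<and> N_degree m ! 0 = 2 * N_degree m ! 1"
    and "keys m \<subseteq> {5} \<longleftrightarrow> N_degree m ! 1 = 0 \<and> N_degree m ! 0 = 2 * N_degree m ! 2"
proof -
  have "keys m \<subseteq> {j} \<longleftrightarrow> (\<forall>i<6. i \<noteq> j \<longrightarrow> lookup m i = 0)" for j
    using assms by (auto simp: in_keys_iff)
  then show "keys m \<subseteq> {0} \<longleftrightarrow> N_degree m ! 2 = 0 \<and> N_degree m ! 0 = 2 * N_degree m ! 1"
    and "keys m \<subseteq> {5} \<longleftrightarrow> N_degree m ! 1 = 0 \<and> N_degree m ! 0 = 2 * N_degree m ! 2"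
    by (simp_all add: N_degree_def numeral_eq_Suc All_less_Suc) linarith+
qed

lemma psubst_coord_point_5_toric_ideal_N:
  assumes "f \<in> toric_ideal N_cols"
  shows "psubst (coord_point 5) f = (0::'a::comm_ring_1 mpoly)"
proof -
  have "(\<Sum>m\<in>keys f. single 0 (lookup f m) * mono_subst (coord_point 5) m) = (0::'a mpoly)"
  proof (rule toric_ideal_sum_eq_0[OF assms additive_single])
    fix m :: "nat \<Rightarrow>\<^sub>0 nat"
    assume "keys m \<subseteq> {..<length N_cols}"
    then show "mono_subst (coord_point 5) m =
        (\<lambda>d. if lookup d 1 = 0 \<and> lookup d 0 = 2 * lookup d 2 then 1 else 0) (toric_degree N_cols m)"
      by (simp add: mono_subst_def prod_coord_point_power keys_subset_singleton_iff_N_degree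
          toric_degree_N nth_default_def)
  qed
  then show ?thesis
    by (simp add: psubst_eq_sum_mono_subst)
qed

lemma eval_coord_point_0_toric_ideal_N:
  assumes "f \<in> toric_ideal N_cols"
  shows "eval_ac f (map (coord_point 0) [0..<6]) = 0"
  unfolding eval_ac_def
proof (rule toric_ideal_sum_eq_0[OF assms])
  show "additive to_ac"
    by unfold_locales simp
  fix m :: "nat \<Rightarrow>\<^sub>0 nat"
  assume keys: "keys m \<subseteq> {..<length N_cols}"
  then have "(\<Prod>i\<in>keys m. (map (coord_point 0) [0..<6] :: 'a alg_closure list) ! i ^ lookup m i) =
      (\<Prod>i\<in>keys m. coord_point 0 i ^ lookup m i)"
    by (intro prod.cong) auto
  also have "\<dots> = (if keys m \<subseteq> {0} then 1 else 0)"
    by (rule prod_coord_point_power)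
  also have "\<dots> = (\<lambda>d. if lookup d 2 = 0 \<and> lookup d 0 = 2 * lookup d 1 then 1 else 0) (toric_degree N_cols m)"
    using keys by (simp add: keys_subset_singleton_iff_N_degree toric_degree_N nth_default_def)
  finally show "(\<Prod>i\<in>keys m. (map (coord_point 0) [0..<6] :: 'a alg_closure list) ! i ^ lookup m i) =
      (\<lambda>d. if lookup d 2 = 0 \<and> lookup d 0 = 2 * lookup d 1 then 1 else 0) (toric_degree N_cols m)" .
qed

lemma coord_point_0_not_in_Gamma_N:
  "map (coord_point 0) [0..<6] \<notin> (Gamma 3 N_cols :: 'a::field alg_closure list set)"
proof
  assume "map (coord_point 0) [0..<6] \<in> (Gamma 3 N_cols :: 'a alg_closure list set)"
  then obtain T :: "nat \<Rightarrow> 'a alg_closure"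
    where T: "map (coord_point 0) [0..<6] = map (\<lambda>b. \<Prod>j<3. T j ^ nat (b ! j)) N_cols"
    by (auto simp: Gamma_def)
  have "T 0 ^ 2 * T 1 = 1"
    using arg_cong[OF T, of "\<lambda>xs. xs ! 0"]
    by (auto simp: coord_point_def N_cols_def numeral_eq_Suc lessThan_Suc power2_eq_square ac_simps)
  moreover have "T 0 * T 1 ^ 2 = 0"
    using arg_cong[OF T, of "\<lambda>xs. xs ! 1"]
    by (auto simp: coord_point_def N_cols_def numeral_eq_Suc lessThan_Suc)
  ultimately show False
    by auto
qed

lemma power_not_in_ideal_N_f1_f2:
  "(Var 5 ^ 2 - Var 2 * Var 3 * Var 4) ^ k \<notin>
     ideal_gen_in (poly_ring 6)
       (toric_ideal N_cols \<union> {Var 2 ^ 3 - Var 0 * Var 1, Var 3 ^ 3 - Var 4 * Var 5 :: 'a::comm_ring_1 mpoly})"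
proof -
  let ?kernel = "{p \<in> poly_ring 6. psubst (coord_point 5) p = (0 :: 'a mpoly)}"
  have "toric_ideal N_cols \<union> {Var 2 ^ 3 - Var 0 * Var 1, Var 3 ^ 3 - Var 4 * Var 5} \<subseteq> ?kernel"
    using psubst_coord_point_5_toric_ideal_N f1_in_toric_ideal_M f2_in_toric_ideal_M
    by (auto simp: toric_ideal_def psubst_hom_simps coord_point_def)
  then have "ideal_gen_in (poly_ring 6)
      (toric_ideal N_cols \<union> {Var 2 ^ 3 - Var 0 * Var 1, Var 3 ^ 3 - Var 4 * Var 5}) \<subseteq> ?kernel"
    by (rule ideal_gen_in_least[OF is_ideal_in_psubst_kernel])
  moreover have "psubst (coord_point 5) ((Var 5 ^ 2 - Var 2 * Var 3 * Var 4) ^ k) \<noteq> (0 :: 'a mpoly)"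
    by (simp add: psubst_hom_simps coord_point_def)
  ultimately show ?thesis
    by blast
qed

theorem mainTheorem4:
  defines "f1 \<equiv> (Var 2 ^ 3 - Var 0 * Var 1 :: 'a::field mpoly)"
      and "f2 \<equiv> (Var 3 ^ 3 - Var 4 * Var 5 :: 'a::field mpoly)"
      and "g \<equiv> (Var 5 ^ 2 - Var 2 * Var 3 * Var 4 :: 'a::field mpoly)"
  shows "(toric_ideal N_cols :: 'a mpoly set) \<subseteq> toric_ideal M_cols \<and>
         rad_in (poly_ring 3) (ideal_gen_in (poly_ring 3) (phiN ` (toric_ideal M_cols :: 'a mpoly set)))
         = rad_in (poly_ring 3) (ideal_gen_in (poly_ring 3) {phiN f1, phiN f2}) \<and>
         (toric_ideal M_cols :: 'a mpoly set)
         \<noteq> rad_in (poly_ring 6) (ideal_gen_in (poly_ring 6) (toric_ideal N_cols \<union> {f1, f2})) \<and>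
         g \<in> toric_ideal M_cols \<and>
         ((\<forall>k. g ^ k \<notin> ideal_gen_in (poly_ring 6) (toric_ideal N_cols \<union> {f1, f2}))) \<and>
         (Gamma 3 N_cols :: 'a alg_closure list set) \<noteq> zero_set 6 (toric_ideal N_cols :: 'a mpoly set)"
proof -
  have g_in_I_M: "g \<in> toric_ideal M_cols"
    unfolding assms by (rule g_in_toric_ideal_M)
  have no_power: "\<forall>k. g ^ k \<notin> ideal_gen_in (poly_ring 6) (toric_ideal N_cols \<union> {f1, f2})"
    unfolding assms using power_not_in_ideal_N_f1_f2 by blast
  then have "g \<notin> rad_in (poly_ring 6) (ideal_gen_in (poly_ring 6) (toric_ideal N_cols \<union> {f1, f2}))"
    by (simp add: rad_in_def)
  moreover have "map (coord_point 0) [0..<6] \<in> zero_set 6 (toric_ideal N_cols :: 'a mpoly set)"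
    by (simp add: zero_set_def eval_coord_point_0_toric_ideal_N)
  ultimately show ?thesis
    using toric_ideal_N_subset_M rad_phiN_toric_ideal_M g_in_I_M no_power coord_point_0_not_in_Gamma_N
    unfolding assms by blast
qed

end
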